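(* For every set of formulas $\Gamma$ and every formula $\alpha$: $\Gamma\vdash_{L_1^2}\alpha$ if and only if $\Gamma\vDash_{\mathcal{M}_1^2}\alpha$.
   Context: Formulas are built from a countable set of propositional variables using unary $\neg,\circ$ and binary $\land,\lor,\to$; $\circ^0\alpha=\alpha$, $\circ^{m+1}\alpha=\circ(\circ^m\alpha)$, $\alpha\leftrightarrow\beta:=(\alpha\to\beta)\land(\beta\to\alpha)$. mbC is the Hilbert calculus with the axiom schemas of a standard axiomatization of positive classical propositional logic in $\land,\lor,\to$, plus (TND) $\alpha\lor\neg\alpha$ and (bc1) $\circ\alpha\to(\alpha\to(\neg\alpha\to\beta))$, with modus ponens as only rule; mbCciw is mbC plus (ciw) $\circ\alpha\lor(\alpha\land\neg\alpha)$; $L_1^0$ is mbCciw plus $\circ\circ\circ\alpha$; $L_1^1$ is $L_1^0$ plus $\neg\neg\alpha\to\alpha$ and $\alpha\to\neg\neg\alpha$; $L_1^2$ is $L_1^1$ plus $\neg\circ\neg\alpha\leftrightarrow\neg\circ\alpha$. $\Gamma\vdash_L\alpha$ means derivability in $L$. Semantics: with Boolean operations $\land,\lor,\to,\sim$ on $\{0,1\}$, let $\mathbb{B}_1^0=\{x\in\{0,1\}^3: x_1\lor x_2=1,\ x_3\lor\sim(x_1\land x_2)=1\}$. The multialgebra $\mathcal{B}_1^2$ on $\mathbb{B}_1^0$ has $x\# y=\{z\in\mathbb{B}_1^0: z_1=x_1\# y_1\}$ for $\#\in\{\land,\lor,\to\}$, $\neg x=\{(x_2,x_1,x_3)\}$,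 $\circ x=\{(\sim(x_1\land x_2),x_3,x_3\land\sim(x_1\land x_2))\}$. $D_1^0=\{x:x_1=1\}$, $\mathcal{M}_1^2=(\mathcal{B}_1^2,D_1^0)$. Valuations over $\mathcal{M}_1^2$ are maps $h$ from formulas to $\mathbb{B}_1^0$ with $h(\alpha\#\beta)\in h(\alpha)\#h(\beta)$, $h(\neg\alpha)\in\neg h(\alpha)$, $h(\circ\alpha)\in\circ h(\alpha)$; $\Gamma\vDash_{\mathcal{M}_1^2}\alpha$ iff every valuation $h$ with $h[\Gamma]\subseteq D_1^0$ has $h(\alpha)\in D_1^0$. *)

theory Defs
  imports Main
begin

datatype fm =
    Var nat
  | Neg fm
  | Circ fm
  | Conj fm fm
  | Disj fm fm
  | Imp fm fm

definition Iff :: "fm \<Rightarrow> fm \<Rightarrow> fm" where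
  "Iff a b = Conj (Imp a b) (Imp b a)"

inductive pos_ax :: "fm \<Rightarrow> bool" where
  Ax1: "pos_ax (Imp a (Imp b a))"
| Ax2: "pos_ax (Imp (Imp a b) (Imp (Imp a (Imp b c)) (Imp a c)))"
| Ax3: "pos_ax (Imp a (Imp b (Conj a b)))"
| Ax4: "pos_ax (Imp (Conj a b) a)"
| Ax5: "pos_ax (Imp (Conj a b) b)"
| Ax6: "pos_ax (Imp a (Disj a b))"
| Ax7: "pos_ax (Imp b (Disj a b))"
| Ax8: "pos_ax (Imp (Imp a c) (Imp (Imp b c) (Imp (Disj a b) c)))"
| Ax9: "pos_ax (Disj a (Imp a b))"

inductive mbC_ax :: "fm \<Rightarrow> bool" where
  pos: "pos_ax a \<Longrightarrow> mbC_ax a"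
| TND: "mbC_ax (Disj a (Neg a))"
| bc1: "mbC_ax (Imp (Circ a) (Imp a (Imp (Neg a) b)))"

inductive L12_ax :: "fm \<Rightarrow> bool" where
  mbC: "mbC_ax a \<Longrightarrow> L12_ax a"
| ciw: "L12_ax (Disj (Circ a) (Conj a (Neg a)))"
| ccc: "L12_ax (Circ (Circ (Circ a)))"
| cf: "L12_ax (Imp (Neg (Neg a)) a)"
| ce: "L12_ax (Imp a (Neg (Neg a)))"
| negcirc: "L12_ax (Iff (Neg (Circ (Neg a))) (Neg (Circ a)))"

inductive derivable_L12 :: "fm set \<Rightarrow> fm \<Rightarrow> bool" where
  premise: "a \<in> \<Gamma> \<Longrightarrow> derivable_L12 \<Gamma> a"
| axiom: "L12_ax a \<Longrightarrow> derivable_L12 \<Gamma> a"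
| mp: "derivable_L12 \<Gamma> a \<Longrightarrow> derivable_L12 \<Gamma> (Imp a b) \<Longrightarrow> derivable_L12 \<Gamma> b"

type_synonym snap = "bool \<times> bool \<times> bool"

definition B10 :: "snap set" where
  "B10 = {(x1, x2, x3). (x1 \<or> x2) \<and> (x3 \<or> \<not> (x1 \<and> x2))}"

definition D10 :: "snap set" where
  "D10 = {x \<in> B10. fst x}"

definition mconj :: "snap \<Rightarrow> snap \<Rightarrow> snap set" where
  "mconj x y = {z \<in> B10. fst z = (fst x \<and> fst y)}"
definition mdisj :: "snap \<Rightarrow> snap \<Rightarrow> snap set" where
  "mdisj x y = {z \<in> B10. fst z = (fst x \<or> fst y)}"
definition mimp :: "snap \<Rightarrow> snap \<Rightarrow> snap set" where
  "mimp x y = {z \<in> B10. fst z = (fst x \<longrightarrow> fst y)}"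
definition mneg :: "snap \<Rightarrow> snap set" where
  "mneg x = (case x of (x1, x2, x3) \<Rightarrow> {(x2, x1, x3)})"
definition mcirc :: "snap \<Rightarrow> snap set" where
  "mcirc x = (case x of (x1, x2, x3) \<Rightarrow>
     {(\<not> (x1 \<and> x2), x3, x3 \<and> \<not> (x1 \<and> x2))})"

definition valuation_M12 :: "(fm \<Rightarrow> snap) \<Rightarrow> bool" where
  "valuation_M12 h \<longleftrightarrow>
     (\<forall>a. h a \<in> B10) \<and>
     (\<forall>a b. h (Conj a b) \<in> mconj (h a) (h b)) \<and>
     (\<forall>a b. h (Disj a b) \<in> mdisj (h a) (h b)) \<and>
     (\<forall>a b. h (Imp a b) \<in> mimp (h a) (h b)) \<and>
     (\<forall>a. h (Neg a) \<in> mneg (h a)) \<and>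
     (\<forall>a. h (Circ a) \<in> mcirc (h a))"

definition entails_M12 :: "fm set \<Rightarrow> fm \<Rightarrow> bool" where
  "entails_M12 \<Gamma> a \<longleftrightarrow>
     (\<forall>h. valuation_M12 h \<longrightarrow> h ` \<Gamma> \<subseteq> D10 \<longrightarrow> h a \<in> D10)"

end

theory Submission
  imports Defs
begin

text \<open>Soundness: every axiom of \<open>L\<^sub>1\<^sup>2\<close> is designated under every valuation, and
  modus ponens preserves designation. Completeness: if \<open>\<alpha>\<close> is not derivable from \<open>\<Gamma>\<close>,
  Lindenbaum's lemma extends \<open>\<Gamma>\<close> to a set \<open>M\<close> maximal among those not deriving \<open>\<alpha>\<close>.
  Then \<open>\<beta> \<mapsto> (\<beta> \<in> M, \<not>\<beta> \<in> M, \<not>\<circ>\<beta> \<in> M)\<close> is a valuation: the positive axioms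
  make the first coordinate Boolean, \<open>\<not>\<not>\<beta> \<leftrightarrow> \<beta>\<close> and \<open>\<not>\<circ>\<not>\<beta> \<leftrightarrow> \<not>\<circ>\<beta>\<close> give the
  clause for \<open>\<not>\<close>, and \<open>\<circ>\<circ>\<circ>\<beta>\<close> together with (ciw) and (bc1) gives the third
  coordinate of \<open>\<circ>\<beta>\<close>. It designates \<open>\<Gamma>\<close> but not \<open>\<alpha>\<close>.\<close>

notation derivable_L12 (infix "\<turnstile>" 55)

lemma derivable_pos_ax: "pos_ax \<alpha> \<Longrightarrow> \<Gamma> \<turnstile> \<alpha>"
  by (intro derivable_L12.axiom L12_ax.mbC mbC_ax.pos)

lemma derivable_mono: "\<Gamma> \<turnstile> \<alpha> \<Longrightarrow> \<Gamma> \<subseteq> \<Delta> \<Longrightarrow> \<Delta> \<turnstile> \<alpha>"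
  by (induction rule: derivable_L12.induct) (auto intro: derivable_L12.intros)

lemma derivable_mp2: "\<Gamma> \<turnstile> Imp \<alpha> (Imp \<beta> \<gamma>) \<Longrightarrow> \<Gamma> \<turnstile> \<alpha> \<Longrightarrow> \<Gamma> \<turnstile> \<beta> \<Longrightarrow> \<Gamma> \<turnstile> \<gamma>"
  by (meson derivable_L12.mp)

lemma derivable_Imp_self: "\<Gamma> \<turnstile> Imp \<alpha> \<alpha>"
  using derivable_mp2 derivable_pos_ax pos_ax.Ax1 pos_ax.Ax2 by blast

theorem deduction: "insert \<beta> \<Gamma> \<turnstile> \<alpha> \<Longrightarrow> \<Gamma> \<turnstile> Imp \<beta> \<alpha>"
proof (induction "insert \<beta> \<Gamma>" \<alpha> rule: derivable_L12.induct)
  case (premise \<alpha>)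
  then show ?case
    by (metis derivable_Imp_self derivable_L12.mp derivable_L12.premise
        derivable_pos_ax insertE pos_ax.Ax1)
next
  case (axiom \<alpha>)
  then show ?case
    by (meson derivable_L12.mp derivable_L12.axiom derivable_pos_ax pos_ax.Ax1)
next
  case (mp \<alpha> \<gamma>)
  then show ?case
    using derivable_mp2 derivable_pos_ax pos_ax.Ax2 by blast
qed

lemma derivable_finite_premises: "\<Gamma> \<turnstile> \<alpha> \<Longrightarrow> \<exists>\<Delta> \<subseteq> \<Gamma>. finite \<Delta> \<and> \<Delta> \<turnstile> \<alpha>"
proof (induction rule: derivable_L12.induct)
  case (premise \<alpha> \<Gamma>)
  then show ?case by (auto intro: derivable_L12.premise)
next
  case (axiom \<alpha> \<Gamma>)
  then show ?case by (auto intro: derivable_L12.axiom)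
next
  case (mp \<Gamma> \<alpha> \<beta>)
  then obtain \<Delta>\<^sub>1 \<Delta>\<^sub>2 where "\<Delta>\<^sub>1 \<subseteq> \<Gamma>" "finite \<Delta>\<^sub>1" "\<Delta>\<^sub>1 \<turnstile> \<alpha>"
    and "\<Delta>\<^sub>2 \<subseteq> \<Gamma>" "finite \<Delta>\<^sub>2" "\<Delta>\<^sub>2 \<turnstile> Imp \<alpha> \<beta>"
    by blast
  then show ?case
    by (meson Un_least Un_upper1 Un_upper2 derivable_L12.mp derivable_mono finite_UnI)
qed

context
  fixes h :: "fm \<Rightarrow> snap"
  assumes h: "valuation_M12 h"
begin

lemma valuation_in_B10: "h \<alpha> \<in> B10"
  using h by (simp add: valuation_M12_def)

lemma valuation_Conj: "fst (h (Conj \<alpha> \<beta>)) = (fst (h \<alpha>) \<and> fst (h \<beta>))"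
  using h by (simp add: valuation_M12_def mconj_def)

lemma valuation_Disj: "fst (h (Disj \<alpha> \<beta>)) = (fst (h \<alpha>) \<or> fst (h \<beta>))"
  using h by (simp add: valuation_M12_def mdisj_def)

lemma valuation_Imp: "fst (h (Imp \<alpha> \<beta>)) = (fst (h \<alpha>) \<longrightarrow> fst (h \<beta>))"
  using h by (simp add: valuation_M12_def mimp_def)

lemma valuation_Neg: "h (Neg \<alpha>) = (case h \<alpha> of (x1, x2, x3) \<Rightarrow> (x2, x1, x3))"
  using h by (simp add: valuation_M12_def mneg_def split: prod.splits)

lemma valuation_Circ:
  "h (Circ \<alpha>) = (case h \<alpha> of (x1, x2, x3) \<Rightarrow> (\<not> (x1 \<and> x2), x3, x3 \<and> \<not> (x1 \<and> x2)))"
  using h by (simp add: valuation_M12_def mcirc_def split: prod.splits)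

lemma L12_ax_designated: "L12_ax \<alpha> \<Longrightarrow> fst (h \<alpha>)"
proof (induction rule: L12_ax.induct)
  case (mbC \<alpha>)
  then show ?case
  proof (induction rule: mbC_ax.induct)
    case (pos \<alpha>)
    then show ?case
      by (induction rule: pos_ax.induct) (auto simp: valuation_Imp valuation_Conj valuation_Disj)
  next
    case (TND \<alpha>)
    then show ?case
      using valuation_in_B10 [of \<alpha>]
      by (auto simp: B10_def valuation_Disj valuation_Neg split: prod.splits)
  qed (auto simp: valuation_Imp valuation_Neg valuation_Circ split: prod.splits)
qed (auto simp: Iff_def valuation_Conj valuation_Disj valuation_Imp valuation_Neg
       valuation_Circ split: prod.splits)

lemma derivable_designated: "\<Gamma> \<turnstile> \<alpha> \<Longrightarrow> h ` \<Gamma> \<subseteq> D10 \<Longrightarrow> h \<alpha> \<in> D10"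
  by (induction rule: derivable_L12.induct)
    (auto simp: D10_def valuation_in_B10 L12_ax_designated valuation_Imp)

end

theorem soundness: "\<Gamma> \<turnstile> \<alpha> \<Longrightarrow> entails_M12 \<Gamma> \<alpha>"
  unfolding entails_M12_def using derivable_designated by blast

definition saturated :: "fm set \<Rightarrow> fm \<Rightarrow> bool" where
  "saturated M \<alpha> \<longleftrightarrow> \<not> M \<turnstile> \<alpha> \<and> (\<forall>\<beta>. \<beta> \<notin> M \<longrightarrow> insert \<beta> M \<turnstile> \<alpha>)"

lemma Lindenbaum:
  assumes "\<not> \<Gamma> \<turnstile> \<alpha>"
  obtains M where "\<Gamma> \<subseteq> M" "saturated M \<alpha>"
proof -
  let ?A = "{\<Delta>. \<Gamma> \<subseteq> \<Delta> \<and> \<not> \<Delta> \<turnstile> \<alpha>}"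
  have "\<exists>M\<in>?A. \<forall>\<Delta>\<in>?A. M \<subseteq> \<Delta> \<longrightarrow> \<Delta> = M"
  proof (rule subset_Zorn_nonempty)
    show "?A \<noteq> {}"
      using assms by blast
  next
    fix \<C> assume "\<C> \<noteq> {}" and chain: "subset.chain ?A \<C>"
    then have "\<C> \<subseteq> ?A"
      by (simp add: subset.chain_def)
    have "\<not> \<Union>\<C> \<turnstile> \<alpha>"
    proof
      assume "\<Union>\<C> \<turnstile> \<alpha>"
      then obtain \<Delta> where "\<Delta> \<subseteq> \<Union>\<C>" "finite \<Delta>" "\<Delta> \<turnstile> \<alpha>"
        using derivable_finite_premises by blast
      obtain C where "C \<in> \<C>" "\<Delta> \<subseteq> C"
        by (rule finite_subset_Union_chain [OF \<open>finite \<Delta>\<close> \<open>\<Delta> \<subseteq> \<Union>\<C>\<close> \<open>\<C> \<noteq> {}\<close> chain])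
      with \<open>\<Delta> \<turnstile> \<alpha>\<close> have "C \<turnstile> \<alpha>"
        using derivable_mono by blast
      then show False
        using \<open>C \<in> \<C>\<close> \<open>\<C> \<subseteq> ?A\<close> by blast
    qed
    moreover have "\<Gamma> \<subseteq> \<Union>\<C>"
      using \<open>\<C> \<noteq> {}\<close> \<open>\<C> \<subseteq> ?A\<close> by blast
    ultimately show "\<Union>\<C> \<in> ?A"
      by blast
  qed
  then obtain M where "M \<in> ?A" and maximal: "\<And>\<Delta>. \<Delta> \<in> ?A \<Longrightarrow> M \<subseteq> \<Delta> \<Longrightarrow> \<Delta> = M"
    by auto
  then have "\<Gamma> \<subseteq> M" "\<not> M \<turnstile> \<alpha>"
    by simp_all
  have "insert \<beta> M \<turnstile> \<alpha>" if "\<beta> \<notin> M" for \<beta>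
    using maximal [of "insert \<beta> M"] \<open>\<Gamma> \<subseteq> M\<close> that by blast
  with \<open>\<Gamma> \<subseteq> M\<close> \<open>\<not> M \<turnstile> \<alpha>\<close> show thesis
    by (intro that) (auto simp: saturated_def)
qed

definition canonical_valuation :: "fm set \<Rightarrow> fm \<Rightarrow> snap" where
  "canonical_valuation M \<beta> = (\<beta> \<in> M, Neg \<beta> \<in> M, Neg (Circ \<beta>) \<in> M)"

context
  fixes M \<alpha>
  assumes M: "saturated M \<alpha>"
begin

lemma saturated_closed: "M \<turnstile> \<beta> \<Longrightarrow> \<beta> \<in> M"
proof (rule ccontr)
  assume "M \<turnstile> \<beta>" "\<beta> \<notin> M"
  then have "M \<turnstile> Imp \<beta> \<alpha>"
    using M deduction unfolding saturated_def by blast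
  then have "M \<turnstile> \<alpha>"
    using \<open>M \<turnstile> \<beta>\<close> derivable_L12.mp by blast
  then show False
    using M unfolding saturated_def by blast
qed

lemma saturated_not_mem: "\<alpha> \<notin> M"
  using M derivable_L12.premise unfolding saturated_def by blast

lemma saturated_L12_ax: "L12_ax \<beta> \<Longrightarrow> \<beta> \<in> M"
  by (simp add: derivable_L12.axiom saturated_closed)

lemma saturated_pos_ax: "pos_ax \<beta> \<Longrightarrow> \<beta> \<in> M"
  by (simp add: derivable_pos_ax saturated_closed)

lemma saturated_mp: "Imp \<beta> \<gamma> \<in> M \<Longrightarrow> \<beta> \<in> M \<Longrightarrow> \<gamma> \<in> M"
  by (meson derivable_L12.mp derivable_L12.premise saturated_closed)

lemma saturated_Conj: "Conj \<beta> \<gamma> \<in> M \<longleftrightarrow> \<beta> \<in> M \<and> \<gamma> \<in> M"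
  by (meson pos_ax.Ax3 pos_ax.Ax4 pos_ax.Ax5 saturated_mp saturated_pos_ax)

lemma saturated_Disj: "Disj \<beta> \<gamma> \<in> M \<longleftrightarrow> \<beta> \<in> M \<or> \<gamma> \<in> M"
proof
  assume "Disj \<beta> \<gamma> \<in> M"
  show "\<beta> \<in> M \<or> \<gamma> \<in> M"
  proof (rule ccontr)
    assume "\<not> (\<beta> \<in> M \<or> \<gamma> \<in> M)"
    then have "M \<turnstile> Imp \<beta> \<alpha>" "M \<turnstile> Imp \<gamma> \<alpha>"
      using M deduction unfolding saturated_def by blast+
    then have "M \<turnstile> Imp (Disj \<beta> \<gamma>) \<alpha>"
      using derivable_mp2 derivable_pos_ax pos_ax.Ax8 by blast
    then have "M \<turnstile> \<alpha>"
      using \<open>Disj \<beta> \<gamma> \<in> M\<close> derivable_L12.mp derivable_L12.premise by blast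
    then show False
      using M unfolding saturated_def by blast
  qed
next
  show "\<beta> \<in> M \<or> \<gamma> \<in> M \<Longrightarrow> Disj \<beta> \<gamma> \<in> M"
    by (meson pos_ax.Ax6 pos_ax.Ax7 saturated_mp saturated_pos_ax)
qed

lemma saturated_Imp: "Imp \<beta> \<gamma> \<in> M \<longleftrightarrow> (\<beta> \<in> M \<longrightarrow> \<gamma> \<in> M)"
proof
  show "Imp \<beta> \<gamma> \<in> M \<Longrightarrow> \<beta> \<in> M \<longrightarrow> \<gamma> \<in> M"
    using saturated_mp by blast
next
  assume "\<beta> \<in> M \<longrightarrow> \<gamma> \<in> M"
  moreover have "\<beta> \<in> M \<or> Imp \<beta> \<gamma> \<in> M"
    using pos_ax.Ax9 saturated_Disj saturated_pos_ax by blast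
  moreover have "\<gamma> \<in> M \<Longrightarrow> Imp \<beta> \<gamma> \<in> M"
    using pos_ax.Ax1 saturated_mp saturated_pos_ax by blast
  ultimately show "Imp \<beta> \<gamma> \<in> M"
    by blast
qed

lemma saturated_excluded_middle: "\<beta> \<in> M \<or> Neg \<beta> \<in> M"
  using L12_ax.mbC mbC_ax.TND saturated_Disj saturated_L12_ax by blast

lemma saturated_Circ: "Circ \<beta> \<in> M \<longleftrightarrow> \<not> (\<beta> \<in> M \<and> Neg \<beta> \<in> M)"
proof -
  have "Imp (Circ \<beta>) (Imp \<beta> (Imp (Neg \<beta>) \<alpha>)) \<in> M"
    using L12_ax.mbC mbC_ax.bc1 saturated_L12_ax by blast
  then have "\<not> (Circ \<beta> \<in> M \<and> \<beta> \<in> M \<and> Neg \<beta> \<in> M)"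
    using saturated_mp saturated_not_mem by blast
  then show ?thesis
    using L12_ax.ciw saturated_Conj saturated_Disj saturated_L12_ax by blast
qed

lemma saturated_Neg_Neg: "Neg (Neg \<beta>) \<in> M \<longleftrightarrow> \<beta> \<in> M"
  using L12_ax.ce L12_ax.cf saturated_L12_ax saturated_mp by blast

lemma saturated_Neg_Circ_Neg: "Neg (Circ (Neg \<beta>)) \<in> M \<longleftrightarrow> Neg (Circ \<beta>) \<in> M"
  using L12_ax.negcirc saturated_Conj saturated_L12_ax saturated_mp unfolding Iff_def by blast

lemma saturated_Neg_Circ_Circ: "Neg (Circ (Circ \<beta>)) \<in> M \<longleftrightarrow> Circ \<beta> \<in> M \<and> Neg (Circ \<beta>) \<in> M"
proof -
  have "Circ (Circ (Circ \<beta>)) \<in> M"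
    by (simp add: L12_ax.ccc saturated_L12_ax)
  then show ?thesis
    using saturated_Circ saturated_excluded_middle by blast
qed

lemma canonical_valuation_in_B10: "canonical_valuation M \<beta> \<in> B10"
  using saturated_Circ saturated_excluded_middle
  by (auto simp: B10_def canonical_valuation_def)

lemma valuation_canonical_valuation: "valuation_M12 (canonical_valuation M)"
proof -
  let ?h = "canonical_valuation M"
  have "?h (Conj \<beta> \<gamma>) \<in> mconj (?h \<beta>) (?h \<gamma>)"
    for \<beta> \<gamma>
    using canonical_valuation_in_B10 [of "Conj \<beta> \<gamma>"]
    by (simp add: mconj_def canonical_valuation_def saturated_Conj)
  moreover have "?h (Disj \<beta> \<gamma>) \<in> mdisj (?h \<beta>) (?h \<gamma>)"
    for \<beta> \<gamma>
    using canonical_valuation_in_B10 [of "Disj \<beta> \<gamma>"]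
    by (simp add: mdisj_def canonical_valuation_def saturated_Disj)
  moreover have "?h (Imp \<beta> \<gamma>) \<in> mimp (?h \<beta>) (?h \<gamma>)"
    for \<beta> \<gamma>
    using canonical_valuation_in_B10 [of "Imp \<beta> \<gamma>"]
    by (simp add: mimp_def canonical_valuation_def saturated_Imp)
  moreover have "?h (Neg \<beta>) \<in> mneg (?h \<beta>)" for \<beta>
    using saturated_Neg_Neg saturated_Neg_Circ_Neg
    by (simp add: mneg_def canonical_valuation_def)
  moreover have "?h (Circ \<beta>) \<in> mcirc (?h \<beta>)" for \<beta>
    using saturated_Circ saturated_Neg_Circ_Circ
    by (auto simp: mcirc_def canonical_valuation_def)
  ultimately show ?thesis
    using canonical_valuation_in_B10 by (simp add: valuation_M12_def)
qed

end

theorem completeness: "entails_M12 \<Gamma> \<alpha> \<Longrightarrow> \<Gamma> \<turnstile> \<alpha>"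
proof (rule ccontr)
  assume entails: "entails_M12 \<Gamma> \<alpha>" and "\<not> \<Gamma> \<turnstile> \<alpha>"
  then obtain M where "\<Gamma> \<subseteq> M" and M: "saturated M \<alpha>"
    using Lindenbaum by metis
  then have "canonical_valuation M ` \<Gamma> \<subseteq> D10"
    using canonical_valuation_in_B10 [OF M] by (auto simp: D10_def canonical_valuation_def)
  then have "canonical_valuation M \<alpha> \<in> D10"
    using entails valuation_canonical_valuation [OF M] unfolding entails_M12_def by blast
  then have "\<alpha> \<in> M"
    by (simp add: D10_def canonical_valuation_def)
  then show False
    using saturated_not_mem [OF M] by blast
qed

theorem theorem10:
  shows "derivable_L12 \<Gamma> \<alpha> \<longleftrightarrow> entails_M12 \<Gamma> \<alpha>"
  using soundness completeness by blast

end
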